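(* Let $m\ge2$ be an integer and $k\ge0$. Then \[ \zeta^t(\{m\}_k)=\sum_{j=0}^k t^j\zeta^\star(\{m\}_j)(1-t)^{k-j}\zeta(\{m\}_{k-j}), \] and \[ \zeta^t(\{m\}_k)=\frac1{k!}B_k(x_1,\dots,x_k),\qquad x_\ell=(\ell-1)!\,\zeta(m\ell)\big(t^\ell-(t-1)^\ell\big). \]
   Context: For $\vec\ell=(\ell_1,\dots,\ell_k)$ with $\ell_1\ge\cdots\ge\ell_k\ge1$ let $\sigma(\vec\ell)=|\{1\le j\le k-1:\ell_j=\ell_{j+1}\}|$. Define $\zeta^t(\{m\}_k)=\sum_{\ell_1\ge\cdots\ge\ell_k\ge1}t^{\sigma(\vec\ell)}\prod_i\ell_i^{-m}$, $\zeta(\{m\}_k)=\sum_{\ell_1>\cdots>\ell_k\ge1}\prod_i\ell_i^{-m}$, $\zeta^\star(\{m\}_k)=\sum_{\ell_1\ge\cdots\ge\ell_k\ge1}\prod_i\ell_i^{-m}$ (all $=1$ for $k=0$), and $\zeta(s)=\sum_{j\ge1}j^{-s}$. Complete Bell polynomials: $\exp(\sum_{\ell\ge1}x_\ell z^\ell/\ell!)=\sum_{j\ge0}B_j(x_1,\dots,x_j)z^j/j!$. *)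

theory Defs
  imports "HOL-Analysis.Analysis" "HOL-Computational_Algebra.Formal_Power_Series"
begin

definition weak_tuples :: "nat \<Rightarrow> nat list set" where
  "weak_tuples k = {l. length l = k \<and> sorted_wrt (\<ge>) l \<and> (\<forall>x\<in>set l. 1 \<le> x)}"

definition strict_tuples :: "nat \<Rightarrow> nat list set" where
  "strict_tuples k = {l. length l = k \<and> sorted_wrt (>) l \<and> (\<forall>x\<in>set l. 1 \<le> x)}"

text \<open>sigma(l) = number of j (1 <= j <= k-1) with l_j = l_(j+1); 0-based here.\<close>
definition sigma_eq :: "nat list \<Rightarrow> nat" where
  "sigma_eq l = card {j. Suc j < length l \<and> l ! j = l ! Suc j}"

definition mzv_term :: "nat \<Rightarrow> nat list \<Rightarrow> real" where
  "mzv_term m l = (\<Prod>x\<leftarrow>l. 1 / real x ^ m)"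

definition zeta_t :: "real \<Rightarrow> nat \<Rightarrow> nat \<Rightarrow> real" where
  "zeta_t t m k = (\<Sum>\<^sub>\<infinity> l\<in>weak_tuples k. t ^ sigma_eq l * mzv_term m l)"

definition zeta_mzv :: "nat \<Rightarrow> nat \<Rightarrow> real" where
  "zeta_mzv m k = (\<Sum>\<^sub>\<infinity> l\<in>strict_tuples k. mzv_term m l)"

definition zeta_star :: "nat \<Rightarrow> nat \<Rightarrow> real" where
  "zeta_star m k = (\<Sum>\<^sub>\<infinity> l\<in>weak_tuples k. mzv_term m l)"

definition rzeta :: "nat \<Rightarrow> real" where
  "rzeta s = (\<Sum>j. 1 / real (Suc j) ^ s)"

text \<open>Complete Bell polynomials via exp(sum_l x_l z^l / l!) = sum_j B_j z^j / j!.
  The variables are x 1, x 2, ... (x 0 unused).\<close>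
definition bell_complete :: "nat \<Rightarrow> (nat \<Rightarrow> real) \<Rightarrow> real" where
  "bell_complete j x = fact j *
     fps_nth (fps_exp 1 oo Abs_fps (\<lambda>l. if l = 0 then 0 else x l / fact l)) j"

end

theory Submission
  imports Defs
begin

unbundle no vec_syntax
unbundle fps_syntax

text \<open>
  Restrict the entries of the tuples to \<open>{1..N}\<close> and put \<open>a n = n^-m\<close>. A weakly decreasing
  tuple is a sequence of runs of equal entries, and a run of \<open>r \<ge> 1\<close> copies of \<open>n\<close> contributes
  \<open>t^(r-1) a n^r\<close>; hence the generating function of the truncated sums \<open>\<zeta>\<^sup>t({m}_k)\<close> is the Euler
  product over \<open>n \<le> N\<close> of \<open>(1 + (1 - t) a n X) / (1 - t a n X)\<close>. The numerator and denominator
  are the \<open>t = 0\<close> and \<open>t = 1\<close> factors with \<open>X\<close> rescaled by \<open>1 - t\<close> and \<open>t\<close>, which yields the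
  convolution formula. The logarithmic derivative of the product has \<open>j\<close>-th coefficient
  \<open>(\<Sum>n\<le>N. a n^(j+1)) (t^(j+1) - (t - 1)^(j+1))\<close>, so the product is \<open>exp (\<Sum>l. x l X^l / l!)\<close>,
  which yields the Bell polynomial formula. For \<open>m \<ge> 2\<close> the sums converge absolutely, so both
  coefficient identities pass to the limit \<open>N \<rightarrow> \<infinity>\<close>.
\<close>

section \<open>Geometric series and Euler factors\<close>

definition fps_geometric :: "'a::comm_ring_1 \<Rightarrow> 'a fps" where
  "fps_geometric c = Abs_fps (\<lambda>n. c ^ n)"

lemma fps_geometric_0 [simp]: "fps_geometric 0 = 1"
proof (rule fps_ext)
  show "fps_geometric 0 $ n = 1 $ n" for n :: nat
    by (cases n) (simp_all add: fps_geometric_def)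
qed

lemma fps_geometric_unfold: "fps_geometric c = 1 + fps_const c * fps_X * fps_geometric c"
proof (rule fps_ext)
  show "fps_geometric c $ n = (1 + fps_const c * fps_X * fps_geometric c) $ n" for n
    by (cases n) (simp_all add: fps_geometric_def mult.assoc)
qed

lemma fps_geometric_times_one_minus: "fps_geometric c * (1 - fps_const c * fps_X) = 1"
proof -
  have "fps_geometric c * (1 - fps_const c * fps_X)
      = fps_geometric c - fps_const c * fps_X * fps_geometric c"
    by (simp add: algebra_simps)
  also have "\<dots> = 1"
    by (subst (1) fps_geometric_unfold) simp
  finally show ?thesis .
qed

lemma fps_geometric_compose_linear:
  "fps_geometric a oo (fps_const c * fps_X) = fps_geometric (c * a)"
  by (simp add: fps_compose_linear fps_geometric_def power_mult_distrib)

lemma fps_deriv_fps_geometric: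
  "fps_deriv (fps_geometric c) = fps_const c * fps_geometric c * fps_geometric c"
proof -
  let ?G = "fps_geometric c" and ?L = "1 - fps_const c * fps_X"
  have "fps_deriv ?G = fps_deriv (1 + fps_const c * fps_X * ?G)"
    by (subst (1) fps_geometric_unfold) (rule refl)
  then have "fps_deriv ?G * ?L = fps_const c * ?G"
    by (simp add: algebra_simps)
  then have "fps_deriv ?G * (?G * ?L) = fps_const c * ?G * ?G"
    by (metis mult.assoc mult.commute)
  then show ?thesis
    by (simp add: fps_geometric_times_one_minus)
qed

definition euler_factor :: "'a::comm_ring_1 \<Rightarrow> 'a \<Rightarrow> 'a fps" where
  "euler_factor t a = fps_geometric (t * a) * (1 - fps_const ((t - 1) * a) * fps_X)"

lemma euler_factor_split:
  fixes t a :: "'a::idom"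
  shows "euler_factor t a =
    (euler_factor 1 a oo (fps_const t * fps_X)) * (euler_factor 0 a oo (fps_const (1 - t) * fps_X))"
  by (simp add: euler_factor_def fps_compose_mult_distrib fps_compose_sub_distrib
      fps_geometric_compose_linear) (simp add: algebra_simps)

lemma fps_deriv_euler_factor:
  "fps_deriv (euler_factor t a) = euler_factor t a *
     (fps_const (t * a) * fps_geometric (t * a) - fps_const ((t - 1) * a) * fps_geometric ((t - 1) * a))"
proof -
  let ?G = "fps_geometric (t * a)" and ?H = "fps_geometric ((t - 1) * a)"
  let ?L = "1 - fps_const ((t - 1) * a) * fps_X"
  have "fps_deriv (euler_factor t a) = fps_const (t * a) * ?G * ?G * ?L - fps_const ((t - 1) * a) * ?G"
    by (simp add: euler_factor_def fps_deriv_fps_geometric flip: fps_const_neg)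
  also have "\<dots> = fps_const (t * a) * ?G * ?G * ?L - fps_const ((t - 1) * a) * ?G * (?H * ?L)"
    by (simp add: fps_geometric_times_one_minus)
  finally show ?thesis
    by (simp add: euler_factor_def algebra_simps)
qed

lemma fps_deriv_prod_logarithmic:
  assumes "\<And>i. i \<in> A \<Longrightarrow> fps_deriv (f i) = f i * g i"
  shows "fps_deriv (\<Prod>i\<in>A. f i) = (\<Prod>i\<in>A. f i) * (\<Sum>i\<in>A. g i)"
  using assms
proof (induction A rule: infinite_finite_induct)
  case (insert i A)
  then show ?case
    by (simp add: algebra_simps)
qed simp_all

text \<open>Uniqueness for the linear ODE \<open>A' = A L'\<close>: the quotient of two solutions has derivative 0.\<close>
lemma fps_eq_exp_compose_if_deriv:
  fixes A L :: "'a::field_char_0 fps"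
  assumes deriv: "fps_deriv A = A * fps_deriv L" and A0: "A $ 0 = 1" and L0: "L $ 0 = 0"
  shows "A = fps_exp 1 oo L"
proof -
  define E where "E = fps_exp (1::'a) oo L"
  have E0: "E $ 0 = 1"
    by (simp add: E_def)
  have "fps_deriv E = E * fps_deriv L"
    by (simp add: E_def fps_compose_deriv[OF L0] fps_compose_mult_distrib[OF L0])
  then have "fps_deriv (A * inverse E) = 0"
    using deriv inverse_mult_eq_1[of E] E0
    by (simp add: fps_inverse_deriv_divring algebra_simps)
  then have "A * inverse E = fps_const ((A * inverse E) $ 0)"
    using fps_deriv_eq_0_iff by blast
  then have "A * inverse E = 1"
    using A0 E0 by simp
  then have "A = E"
    by (metis E0 inverse_mult_eq_1 mult.assoc mult_1 mult.commute one_neq_zero)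
  then show ?thesis
    by (simp add: E_def)
qed

text \<open>Solves \<open>h = a (f + t h)\<close> for \<open>f + h\<close> without dividing by \<open>1 - t a\<close>.\<close>
lemma mult_one_minus_absorb:
  fixes f h t a :: "'a::comm_ring_1"
  assumes "h = a * (f + t * h)"
  shows "(f + h) * (1 - t * a) = f * (1 - (t - 1) * a)"
proof -
  have "(f + h) * (1 - t * a) - f * (1 - (t - 1) * a) = h - a * (f + t * h)"
    by (simp add: algebra_simps)
  then show ?thesis
    using assms by simp
qed

section \<open>Tuples with bounded entries\<close>

lemma sigma_eq_Nil [simp]: "sigma_eq [] = 0"
  by (simp add: sigma_eq_def)

lemma sigma_eq_Cons:
  "sigma_eq (x # r) = sigma_eq r + (if r \<noteq> [] \<and> x = hd r then 1 else 0)"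
proof -
  let ?S = "\<lambda>l. {j. Suc j < length l \<and> l ! j = l ! Suc j}"
  let ?head = "if r \<noteq> [] \<and> x = hd r then {0} else {}"
  have "?S (x # r) = ?head \<union> Suc ` ?S r"
  proof (intro set_eqI iffI)
    fix j assume "j \<in> ?S (x # r)"
    then show "j \<in> ?head \<union> Suc ` ?S r"
      by (cases j) (auto simp: hd_conv_nth)
  qed (auto simp: hd_conv_nth split: if_splits)
  moreover have "finite (?S r)"
    by (rule finite_subset[of _ "{..<length r}"]) auto
  ultimately show ?thesis
    by (simp add: sigma_eq_def card_Un_disjoint card_image)
qed

lemma sigma_eq_le_length: "sigma_eq l \<le> length l"
  by (induction l) (auto simp: sigma_eq_Cons)

lemma sigma_eq_eq_0_iff:
  "sorted_wrt (\<ge>) l \<Longrightarrow> sigma_eq l = 0 \<longleftrightarrow> sorted_wrt (>) (l :: nat list)"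
proof (induction l)
  case (Cons x r)
  then show ?case
    by (cases r) (auto simp: sigma_eq_Cons)
qed simp

lemma mzv_term_Nil [simp]: "mzv_term m [] = 1"
  by (simp add: mzv_term_def)

lemma mzv_term_Cons: "mzv_term m (x # r) = 1 / real x ^ m * mzv_term m r"
  by (simp add: mzv_term_def)

lemma mzv_term_nonneg: "0 \<le> mzv_term m l"
  by (induction l) (auto simp: mzv_term_Cons)

definition zeta_t_term :: "real \<Rightarrow> nat \<Rightarrow> nat list \<Rightarrow> real" where
  "zeta_t_term t m l = t ^ sigma_eq l * mzv_term m l"

lemma zeta_t_term_Cons_greater:
  assumes "\<forall>y\<in>set r. y < x"
  shows "zeta_t_term t m (x # r) = 1 / real x ^ m * zeta_t_term t m r"
  using assms by (cases r) (auto simp: zeta_t_term_def sigma_eq_Cons mzv_term_Cons)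

lemma zeta_t_term_Cons_hd:
  assumes "r \<noteq> []" "hd r = x"
  shows "zeta_t_term t m (x # r) = 1 / real x ^ m * t * zeta_t_term t m r"
  using assms by (simp add: zeta_t_term_def sigma_eq_Cons mzv_term_Cons)

definition bounded_weak_tuples :: "nat \<Rightarrow> nat \<Rightarrow> nat list set" where
  "bounded_weak_tuples N k = {l \<in> weak_tuples k. \<forall>x\<in>set l. x \<le> N}"

definition weak_tuples_with_max :: "nat \<Rightarrow> nat \<Rightarrow> nat list set" where
  "weak_tuples_with_max N k = {l \<in> bounded_weak_tuples N k. l \<noteq> [] \<and> hd l = N}"

lemma finite_bounded_weak_tuples: "finite (bounded_weak_tuples N k)"
  by (rule finite_subset[of _ "{l. set l \<subseteq> {..N} \<and> length l = k}"])
     (auto simp: bounded_weak_tuples_def weak_tuples_def intro: finite_lists_length_eq)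

lemma finite_weak_tuples_with_max: "finite (weak_tuples_with_max N k)"
  using finite_bounded_weak_tuples by (simp add: weak_tuples_with_max_def)

lemma bounded_weak_tuples_0 [simp]: "bounded_weak_tuples N 0 = {[]}"
  by (auto simp: bounded_weak_tuples_def weak_tuples_def)

lemma bounded_weak_tuples_zero_Suc [simp]: "bounded_weak_tuples 0 (Suc k) = {}"
  by (auto simp: bounded_weak_tuples_def weak_tuples_def length_Suc_conv)

lemma bounded_weak_tuples_Suc:
  "bounded_weak_tuples (Suc N) k = bounded_weak_tuples N k \<union> weak_tuples_with_max (Suc N) k"
proof (intro set_eqI iffI)
  fix l assume l: "l \<in> bounded_weak_tuples (Suc N) k"
  show "l \<in> bounded_weak_tuples N k \<union> weak_tuples_with_max (Suc N) k"
  proof (cases l)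
    case (Cons h r)
    with l show ?thesis
      by (cases "h = Suc N")
         (auto simp: bounded_weak_tuples_def weak_tuples_with_max_def weak_tuples_def)
  qed (use l in \<open>auto simp: bounded_weak_tuples_def\<close>)
qed (auto simp: bounded_weak_tuples_def weak_tuples_with_max_def)

lemma bounded_weak_tuples_disjoint_with_max:
  "bounded_weak_tuples N k \<inter> weak_tuples_with_max (Suc N) k = {}"
  by (auto simp: bounded_weak_tuples_def weak_tuples_with_max_def neq_Nil_conv)

lemma weak_tuples_with_max_Suc:
  "weak_tuples_with_max (Suc N) (Suc k) = Cons (Suc N) ` bounded_weak_tuples (Suc N) k"
proof (intro set_eqI iffI)
  fix l assume "l \<in> weak_tuples_with_max (Suc N) (Suc k)"
  then show "l \<in> Cons (Suc N) ` bounded_weak_tuples (Suc N) k"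
    by (cases l) (auto simp: weak_tuples_with_max_def bounded_weak_tuples_def weak_tuples_def)
qed (auto simp: weak_tuples_with_max_def bounded_weak_tuples_def weak_tuples_def)

lemma bounded_weak_tuples_mono: "N \<le> N' \<Longrightarrow> bounded_weak_tuples N k \<subseteq> bounded_weak_tuples N' k"
  by (auto simp: bounded_weak_tuples_def)

lemma finite_subset_bounded_weak_tuples:
  assumes "finite F" "F \<subseteq> weak_tuples k"
  shows "\<exists>N. F \<subseteq> bounded_weak_tuples N k"
proof
  show "F \<subseteq> bounded_weak_tuples (Max (\<Union>(set ` F))) k"
    using assms by (auto simp: bounded_weak_tuples_def intro: Max_ge)
qed

lemma bounded_weak_tuples_tendsto:
  "filterlim (\<lambda>N. bounded_weak_tuples N k) (finite_subsets_at_top (weak_tuples k)) sequentially"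
  unfolding filterlim_iff
proof (intro allI impI)
  fix P assume "eventually P (finite_subsets_at_top (weak_tuples k))"
  then obtain X where X: "finite X" "X \<subseteq> weak_tuples k"
    and P: "\<And>Y. finite Y \<Longrightarrow> X \<subseteq> Y \<Longrightarrow> Y \<subseteq> weak_tuples k \<Longrightarrow> P Y"
    by (auto simp: eventually_finite_subsets_at_top)
  obtain N0 where "X \<subseteq> bounded_weak_tuples N0 k"
    using finite_subset_bounded_weak_tuples[OF X] by blast
  then have "P (bounded_weak_tuples N k)" if "N0 \<le> N" for N
    using that bounded_weak_tuples_mono[OF that, of k] finite_bounded_weak_tuples[of N k]
    by (intro P) (auto simp: bounded_weak_tuples_def)
  then show "eventually (\<lambda>N. P (bounded_weak_tuples N k)) sequentially"
    unfolding eventually_sequentially by blast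
qed

definition zeta_t_partial :: "real \<Rightarrow> nat \<Rightarrow> nat \<Rightarrow> nat \<Rightarrow> real" where
  "zeta_t_partial t m N k = (\<Sum>l\<in>bounded_weak_tuples N k. zeta_t_term t m l)"

definition zeta_t_partial_with_max :: "real \<Rightarrow> nat \<Rightarrow> nat \<Rightarrow> nat \<Rightarrow> real" where
  "zeta_t_partial_with_max t m N k = (\<Sum>l\<in>weak_tuples_with_max N k. zeta_t_term t m l)"

lemma zeta_t_partial_0: "zeta_t_partial t m 0 k = (if k = 0 then 1 else 0)"
  by (cases k) (simp_all add: zeta_t_partial_def zeta_t_term_def)

lemma zeta_t_partial_Suc:
  "zeta_t_partial t m (Suc N) k = zeta_t_partial t m N k + zeta_t_partial_with_max t m (Suc N) k"
  unfolding zeta_t_partial_def zeta_t_partial_with_max_def bounded_weak_tuples_Suc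
  by (rule sum.union_disjoint)
     (auto simp: finite_bounded_weak_tuples finite_weak_tuples_with_max
                 bounded_weak_tuples_disjoint_with_max)

lemma zeta_t_partial_with_max_0 [simp]: "zeta_t_partial_with_max t m N 0 = 0"
proof -
  have "weak_tuples_with_max N 0 = {}"
    by (auto simp: weak_tuples_with_max_def)
  then show ?thesis
    by (simp add: zeta_t_partial_with_max_def)
qed

text \<open>A tuple with largest entry \<open>N + 1\<close> is \<open>N + 1\<close> followed either by a tuple with entries
  \<open>\<le> N\<close> or by another tuple with largest entry \<open>N + 1\<close>; only the latter adds to \<open>\<sigma>\<close>.\<close>
lemma zeta_t_partial_with_max_Suc:
  "zeta_t_partial_with_max t m (Suc N) (Suc k) =
     1 / real (Suc N) ^ m * (zeta_t_partial t m N k + t * zeta_t_partial_with_max t m (Suc N) k)"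
proof -
  let ?a = "1 / real (Suc N) ^ m" and ?z = "zeta_t_term t m"
  have "zeta_t_partial_with_max t m (Suc N) (Suc k) =
      (\<Sum>r\<in>bounded_weak_tuples (Suc N) k. ?z (Suc N # r))"
    unfolding zeta_t_partial_with_max_def weak_tuples_with_max_Suc by (simp add: sum.reindex)
  also have "\<dots> = (\<Sum>r\<in>bounded_weak_tuples N k. ?z (Suc N # r))
                 + (\<Sum>r\<in>weak_tuples_with_max (Suc N) k. ?z (Suc N # r))"
    unfolding bounded_weak_tuples_Suc
    by (rule sum.union_disjoint)
       (auto simp: finite_bounded_weak_tuples finite_weak_tuples_with_max
                   bounded_weak_tuples_disjoint_with_max)
  also have "(\<Sum>r\<in>bounded_weak_tuples N k. ?z (Suc N # r)) = ?a * zeta_t_partial t m N k"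
    unfolding zeta_t_partial_def sum_distrib_left
    by (intro sum.cong refl zeta_t_term_Cons_greater) (auto simp: bounded_weak_tuples_def)
  also have "(\<Sum>r\<in>weak_tuples_with_max (Suc N) k. ?z (Suc N # r))
           = ?a * t * zeta_t_partial_with_max t m (Suc N) k"
    unfolding zeta_t_partial_with_max_def sum_distrib_left
    by (intro sum.cong refl zeta_t_term_Cons_hd) (auto simp: weak_tuples_with_max_def)
  finally show ?thesis
    by (simp add: algebra_simps)
qed

definition zeta_partial :: "nat \<Rightarrow> nat \<Rightarrow> real" where
  "zeta_partial s N = (\<Sum>n=1..N. 1 / real n ^ s)"

lemma Abs_fps_zeta_t_partial:
  "Abs_fps (zeta_t_partial t m N) = (\<Prod>n=1..N. euler_factor t (1 / real n ^ m))"
proof (induction N)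
  case 0
  show ?case
    by (rule fps_ext) (simp add: zeta_t_partial_0)
next
  case (Suc N)
  define a where "a = 1 / real (Suc N) ^ m"
  define F where "F = Abs_fps (zeta_t_partial t m N)"
  define H where "H = Abs_fps (zeta_t_partial_with_max t m (Suc N))"
  have F_Suc: "Abs_fps (zeta_t_partial t m (Suc N)) = F + H"
    by (rule fps_ext) (simp add: F_def H_def zeta_t_partial_Suc)
  have H: "H = fps_const a * fps_X * (F + fps_const t * H)"
  proof (rule fps_ext)
    show "H $ n = (fps_const a * fps_X * (F + fps_const t * H)) $ n" for n
      by (cases n) (simp_all add: F_def H_def a_def zeta_t_partial_with_max_Suc mult.assoc)
  qed
  have scale_t: "fps_const t * (fps_const a * fps_X) = fps_const (t * a) * fps_X"
    by (simp add: mult.assoc)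
  have scale_t_minus_1: "(fps_const t - 1) * (fps_const a * fps_X) = fps_const ((t - 1) * a) * fps_X"
    by (metis fps_const_1_eq_1 fps_const_mult fps_const_sub mult.assoc)
  have absorbed:
    "(F + H) * (1 - fps_const (t * a) * fps_X) = F * (1 - fps_const ((t - 1) * a) * fps_X)"
    using mult_one_minus_absorb[OF H] by (simp only: scale_t scale_t_minus_1)
  have "F + H = (F + H) * (fps_geometric (t * a) * (1 - fps_const (t * a) * fps_X))"
    by (simp add: fps_geometric_times_one_minus)
  also have "\<dots> = fps_geometric (t * a) * ((F + H) * (1 - fps_const (t * a) * fps_X))"
    by (simp only: ac_simps)
  also have "\<dots> = F * euler_factor t a"
    by (simp only: absorbed euler_factor_def) (simp only: ac_simps)
  finally have "F + H = F * euler_factor t a" .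
  then show ?case
    by (simp add: F_Suc Suc.IH F_def a_def prod.cl_ivl_Suc)
qed

lemma zeta_t_partial_convolution:
  "zeta_t_partial t m N k =
     (\<Sum>j=0..k. t ^ j * zeta_t_partial 1 m N j * ((1 - t) ^ (k - j) * zeta_t_partial 0 m N (k - j)))"
proof -
  have "Abs_fps (zeta_t_partial t m N) =
      (Abs_fps (zeta_t_partial 1 m N) oo (fps_const t * fps_X)) *
      (Abs_fps (zeta_t_partial 0 m N) oo (fps_const (1 - t) * fps_X))"
    unfolding Abs_fps_zeta_t_partial
    by (subst euler_factor_split) (simp add: prod.distrib fps_compose_prod_distrib)
  then show ?thesis
    by (simp add: fps_eq_iff fps_mult_nth)
qed

lemma zeta_t_partial_recurrence:
  "real (Suc k) * zeta_t_partial t m N (Suc k) =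
     (\<Sum>i=0..k. zeta_t_partial t m N i *
        (zeta_partial (m * Suc (k - i)) N * (t ^ Suc (k - i) - (t - 1) ^ Suc (k - i))))"
proof -
  define g where "g n = fps_const (t * (1 / real n ^ m)) * fps_geometric (t * (1 / real n ^ m))
    - fps_const ((t - 1) * (1 / real n ^ m)) * fps_geometric ((t - 1) * (1 / real n ^ m))" for n
  have "fps_deriv (Abs_fps (zeta_t_partial t m N)) = Abs_fps (zeta_t_partial t m N) * (\<Sum>n=1..N. g n)"
    unfolding Abs_fps_zeta_t_partial g_def
    by (rule fps_deriv_prod_logarithmic) (rule fps_deriv_euler_factor)
  moreover have "(\<Sum>n=1..N. g n) $ j = zeta_partial (m * Suc j) N * (t ^ Suc j - (t - 1) ^ Suc j)" for j
  proof -
    have "(\<Sum>n=1..N. g n) $ j = (\<Sum>n=1..N. (t * (1 / real n ^ m)) ^ Suc j - ((t - 1) * (1 / real n ^ m)) ^ Suc j)"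
      by (simp add: g_def fps_sum_nth fps_geometric_def)
    also have "\<dots> = (\<Sum>n=1..N. 1 / real n ^ (m * Suc j) * (t ^ Suc j - (t - 1) ^ Suc j))"
      by (simp only: power_mult_distrib power_one_over power_mult right_diff_distrib ac_simps)
    finally show ?thesis
      by (simp add: zeta_partial_def sum_distrib_right)
  qed
  ultimately show ?thesis
    by (simp add: fps_eq_iff fps_mult_nth)
qed

section \<open>Passage to the limit\<close>

lemma summable_inverse_Suc_power: "2 \<le> s \<Longrightarrow> summable (\<lambda>i. 1 / real (Suc i) ^ s)"
proof -
  assume "2 \<le> s"
  then have "summable (\<lambda>n. inverse (real n ^ s))"
    by (rule inverse_power_summable)
  then show ?thesis
    by (subst (asm) summable_Suc_iff[symmetric]) (simp add: inverse_eq_divide)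
qed

lemma zeta_partial_eq_sum_lessThan: "zeta_partial s N = (\<Sum>i<N. 1 / real (Suc i) ^ s)"
  by (simp add: zeta_partial_def sum.atLeast1_atMost_eq)

lemma zeta_partial_tendsto: "2 \<le> s \<Longrightarrow> zeta_partial s \<longlonglongrightarrow> rzeta s"
  unfolding zeta_partial_eq_sum_lessThan[abs_def] rzeta_def
  by (rule summable_LIMSEQ[OF summable_inverse_Suc_power])

lemma zeta_partial_le_rzeta: "2 \<le> s \<Longrightarrow> zeta_partial s N \<le> rzeta s"
  unfolding zeta_partial_eq_sum_lessThan rzeta_def
  by (rule sum_le_suminf[OF summable_inverse_Suc_power]) auto

lemma zeta_t_partial_1_Suc_Suc:
  "zeta_t_partial 1 m (Suc N) (Suc k) =
     zeta_t_partial 1 m N (Suc k) + 1 / real (Suc N) ^ m * zeta_t_partial 1 m (Suc N) k"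
  by (simp add: zeta_t_partial_Suc zeta_t_partial_with_max_Suc)

lemma zeta_t_partial_1_le_power: "zeta_t_partial 1 m N k \<le> zeta_partial m N ^ k"
proof (induction N arbitrary: k)
  case 0
  then show ?case
    by (simp add: zeta_t_partial_0 zeta_partial_def)
next
  case (Suc N)
  let ?a = "1 / real (Suc N) ^ m" and ?p = "zeta_partial m"
  have p_Suc: "?p (Suc N) = ?p N + ?a"
    by (simp add: zeta_partial_def)
  have p_nonneg: "0 \<le> ?p N"
    by (simp add: zeta_partial_def sum_nonneg)
  show ?case
  proof (induction k)
    case 0
    then show ?case
      by (simp add: zeta_t_partial_def zeta_t_term_def)
  next
    case (Suc k)
    have "zeta_t_partial 1 m (Suc N) (Suc k) \<le> ?p N ^ Suc k + ?a * ?p (Suc N) ^ k"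
      unfolding zeta_t_partial_1_Suc_Suc
      using Suc.IH \<open>\<And>k. zeta_t_partial 1 m N k \<le> ?p N ^ k\<close>[of "Suc k"]
      by (intro add_mono mult_left_mono) auto
    also have "\<dots> \<le> ?p N * ?p (Suc N) ^ k + ?a * ?p (Suc N) ^ k"
      using p_nonneg p_Suc by (simp add: mult_left_mono power_mono)
    also have "\<dots> = ?p (Suc N) ^ Suc k"
      by (simp add: p_Suc algebra_simps)
    finally show ?case .
  qed
qed

lemma summable_zeta_t_term:
  assumes "2 \<le> m"
  shows "zeta_t_term t m summable_on weak_tuples k"
proof -
  define B where "B = max 1 \<bar>t\<bar> ^ k"
  have bound: "norm (zeta_t_term t m l) \<le> B * mzv_term m l" if "l \<in> weak_tuples k" for l
  proof -
    have "\<bar>t\<bar> ^ sigma_eq l \<le> max 1 \<bar>t\<bar> ^ sigma_eq l"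
      by (intro power_mono) auto
    also have "\<dots> \<le> B"
      unfolding B_def using sigma_eq_le_length[of l] that
      by (intro power_increasing) (auto simp: weak_tuples_def)
    finally show ?thesis
      by (simp add: zeta_t_term_def abs_mult power_abs mzv_term_nonneg mult_right_mono)
  qed
  have "(\<lambda>l. norm (zeta_t_term t m l)) summable_on weak_tuples k"
  proof (rule nonneg_bdd_above_summable_on[OF _ bdd_aboveI2])
    fix F assume "F \<in> {F. F \<subseteq> weak_tuples k \<and> finite F}"
    then obtain N where F: "finite F" "F \<subseteq> bounded_weak_tuples N k"
      using finite_subset_bounded_weak_tuples by blast
    have "(\<Sum>l\<in>F. norm (zeta_t_term t m l)) \<le> (\<Sum>l\<in>bounded_weak_tuples N k. norm (zeta_t_term t m l))"
      using F by (intro sum_mono2 finite_bounded_weak_tuples) auto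
    also have "\<dots> \<le> (\<Sum>l\<in>bounded_weak_tuples N k. B * mzv_term m l)"
      by (intro sum_mono bound) (auto simp: bounded_weak_tuples_def)
    also have "\<dots> = B * zeta_t_partial 1 m N k"
      by (simp add: zeta_t_partial_def zeta_t_term_def sum_distrib_left)
    also have "\<dots> \<le> B * rzeta m ^ k"
      using zeta_t_partial_1_le_power[of m N k] zeta_partial_le_rzeta[OF assms, of N]
        power_mono[of "zeta_partial m N" "rzeta m" k]
      by (intro mult_left_mono) (auto simp: B_def zeta_partial_def sum_nonneg)
    finally show "(\<Sum>l\<in>F. norm (zeta_t_term t m l)) \<le> B * rzeta m ^ k" .
  qed simp
  then show ?thesis
    using summable_on_iff_abs_summable_on_real by blast
qed

lemma zeta_t_eq_infsum: "zeta_t t m k = (\<Sum>\<^sub>\<infinity>l\<in>weak_tuples k. zeta_t_term t m l)"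
  by (simp add: zeta_t_def zeta_t_term_def)

lemma zeta_t_partial_tendsto:
  assumes "2 \<le> m"
  shows "(\<lambda>N. zeta_t_partial t m N k) \<longlonglongrightarrow> zeta_t t m k"
proof -
  have "(zeta_t_term t m has_sum zeta_t t m k) (weak_tuples k)"
    unfolding zeta_t_eq_infsum by (rule has_sum_infsum[OF summable_zeta_t_term[OF assms]])
  then have "(sum (zeta_t_term t m) \<longlongrightarrow> zeta_t t m k) (finite_subsets_at_top (weak_tuples k))"
    by (simp add: has_sum_def)
  from filterlim_compose[OF this bounded_weak_tuples_tendsto] show ?thesis
    by (simp add: zeta_t_partial_def)
qed

lemma zeta_t_1_eq_zeta_star: "zeta_t 1 m k = zeta_star m k"
  by (simp add: zeta_star_def zeta_t_def)

lemma zeta_t_0_eq_zeta_mzv: "zeta_t 0 m k = zeta_mzv m k"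
  unfolding zeta_mzv_def zeta_t_def
proof (rule infsum_cong_neutral)
  fix l assume "l \<in> strict_tuples k - weak_tuples k"
  then show "mzv_term m l = 0"
    using sorted_wrt_mono_rel[of l "(>)" "(\<ge>)"] by (auto simp: strict_tuples_def weak_tuples_def)
next
  fix l assume "l \<in> weak_tuples k - strict_tuples k"
  then show "0 ^ sigma_eq l * mzv_term m l = 0"
    using sigma_eq_eq_0_iff[of l] by (auto simp: weak_tuples_def strict_tuples_def)
next
  fix l assume "l \<in> weak_tuples k \<inter> strict_tuples k"
  then show "0 ^ sigma_eq l * mzv_term m l = mzv_term m l"
    using sigma_eq_eq_0_iff[of l] by (auto simp: weak_tuples_def strict_tuples_def)
qed

lemma zeta_t_depth_0 [simp]: "zeta_t t m 0 = 1"
proof -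
  have "weak_tuples 0 = {[]}"
    by (auto simp: weak_tuples_def)
  then show ?thesis
    by (simp add: zeta_t_def)
qed

lemma zeta_t_convolution:
  assumes "2 \<le> m"
  shows "zeta_t t m k = (\<Sum>j=0..k. t ^ j * zeta_star m j * (1 - t) ^ (k - j) * zeta_mzv m (k - j))"
proof (rule LIMSEQ_unique[OF zeta_t_partial_tendsto[OF assms]])
  show "(\<lambda>N. zeta_t_partial t m N k) \<longlonglongrightarrow>
      (\<Sum>j=0..k. t ^ j * zeta_star m j * (1 - t) ^ (k - j) * zeta_mzv m (k - j))"
    unfolding zeta_t_partial_convolution[of t] zeta_t_1_eq_zeta_star[symmetric] zeta_t_0_eq_zeta_mzv[symmetric] mult.assoc
    by (intro tendsto_intros zeta_t_partial_tendsto[OF assms])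
qed

lemma zeta_t_recurrence:
  assumes "2 \<le> m"
  shows "real (Suc k) * zeta_t t m (Suc k) =
     (\<Sum>i=0..k. zeta_t t m i * (rzeta (m * Suc (k - i)) * (t ^ Suc (k - i) - (t - 1) ^ Suc (k - i))))"
proof (rule LIMSEQ_unique)
  show "(\<lambda>N. real (Suc k) * zeta_t_partial t m N (Suc k)) \<longlonglongrightarrow> real (Suc k) * zeta_t t m (Suc k)"
    by (intro tendsto_intros zeta_t_partial_tendsto[OF assms])
  have "2 \<le> m * Suc j" for j
    using assms by (simp add: le_trans[OF _ mult_le_mono2])
  then show "(\<lambda>N. real (Suc k) * zeta_t_partial t m N (Suc k)) \<longlonglongrightarrow>
     (\<Sum>i=0..k. zeta_t t m i * (rzeta (m * Suc (k - i)) * (t ^ Suc (k - i) - (t - 1) ^ Suc (k - i))))"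
    unfolding zeta_t_partial_recurrence
    using assms by (intro tendsto_intros zeta_t_partial_tendsto zeta_partial_tendsto)
qed

lemma fps_zeta_t_eq_exp_compose:
  assumes "2 \<le> m"
  shows "Abs_fps (zeta_t t m) = fps_exp 1 oo
    Abs_fps (\<lambda>l. if l = 0 then 0 else fact (l - 1) * rzeta (m * l) * (t ^ l - (t - 1) ^ l) / fact l)"
    (is "_ = _ oo ?L")
proof (rule fps_eq_exp_compose_if_deriv)
  have "fps_deriv ?L = Abs_fps (\<lambda>j. rzeta (m * Suc j) * (t ^ Suc j - (t - 1) ^ Suc j))"
    by (rule fps_ext) (simp add: fact_Suc field_simps del: of_nat_Suc)
  then show "fps_deriv (Abs_fps (zeta_t t m)) = Abs_fps (zeta_t t m) * fps_deriv ?L"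
    using zeta_t_recurrence[OF assms] by (simp add: fps_eq_iff fps_mult_nth)
qed simp_all

theorem mainTheorem11:
  fixes m k :: nat and t :: real
  assumes "m \<ge> 2"
  shows "zeta_t t m k =
           (\<Sum>j=0..k. t ^ j * zeta_star m j * (1 - t) ^ (k - j) * zeta_mzv m (k - j))
       \<and> zeta_t t m k =
           bell_complete k (\<lambda>l. fact (l - 1) * rzeta (m * l) * (t ^ l - (t - 1) ^ l)) / fact k"
proof
  show "zeta_t t m k = (\<Sum>j=0..k. t ^ j * zeta_star m j * (1 - t) ^ (k - j) * zeta_mzv m (k - j))"
    using assms by (rule zeta_t_convolution)
  show "zeta_t t m k =
      bell_complete k (\<lambda>l. fact (l - 1) * rzeta (m * l) * (t ^ l - (t - 1) ^ l)) / fact k"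
    unfolding bell_complete_def fps_zeta_t_eq_exp_compose[OF assms, symmetric] by simp
qed

end
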